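(* Let $a>b\geq c>d>0$ and let $p,q$ be real numbers with $p,q\notin\{0,-1\}$. If $ad-bc>0$, then $$\left(\frac{L_p(a,b)}{L_p(c,d)}\right)^p\geq \left(\frac{L_q(a,b)}{L_q(c,d)}\right)^q\left(\frac{I(a^{q+1},b^{q+1})}{I(c^{q+1},d^{q+1})}\right)^{\frac{p-q}{q+1}}.$$ If $ad-bc<0$, the reverse inequality holds. Equality holds if and only if $ad-bc=0$ or $p=q$.
   Context: For $u,v>0$: the identric mean is $I(u,v)=\frac{1}{e}\left(\frac{u^u}{v^v}\right)^{1/(u-v)}$ if $u\neq v$ and $I(u,u)=u$; for $p\neq 0,-1$ the $p$-logarithmic mean is $L_p(u,v)=\left(\frac{u^{p+1}-v^{p+1}}{(p+1)(u-v)}\right)^{1/p}$ if $u\neq v$ and $L_p(u,u)=u$. *)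

theory Defs
  imports Complex_Main
begin

definition identric :: "real \<Rightarrow> real \<Rightarrow> real" where
  "identric u v = (if u = v then u
     else (1 / exp 1) * ((u powr u) / (v powr v)) powr (1 / (u - v)))"

definition plog_mean :: "real \<Rightarrow> real \<Rightarrow> real \<Rightarrow> real" where
  "plog_mean p u v = (if u = v then u
     else ((u powr (p + 1) - v powr (p + 1)) / ((p + 1) * (u - v))) powr (1 / p))"

end

theory Submission
  imports Defs
begin

text \<open>Put \<open>s = p + 1\<close>, \<open>\<alpha> = ln (a/b) / 2\<close>, \<open>\<beta> = ln (c/d) / 2\<close>, \<open>\<mu> = ln (ab/cd) / 2\<close> and
  \<open>G s = ln (sinh (s\<alpha>) / sinh (s\<beta>))\<close>. Writing \<open>u\<^sup>s - v\<^sup>s\<close> through \<open>sinh\<close> gives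
  \<open>(L\<^sub>p(a,b) / L\<^sub>p(c,d))\<^sup>p = (c - d)/(a - b) \<cdot> exp (s\<mu> + G s)\<close> and
  \<open>I(a\<^sup>s,b\<^sup>s) / I(c\<^sup>s,d\<^sup>s) = exp (s (\<mu> + G' s))\<close>, so the inequality compares \<open>G (p + 1)\<close>
  with the tangent of \<open>G\<close> at \<open>q + 1\<close>. The function \<open>G\<close> is even, and for \<open>\<alpha> > \<beta>\<close> it is
  strictly convex with \<open>G' > 0\<close> on \<open>(0, \<infinity>)\<close>, because \<open>sinh u / u\<close> and \<open>u coth u\<close> increase
  there; hence it lies strictly above every tangent taken at a nonzero point. For \<open>\<alpha> < \<beta>\<close>
  the sign of \<open>G\<close> flips, and \<open>\<alpha> = \<beta>\<close>, i.e. \<open>ad = bc\<close>, makes \<open>G\<close> vanish.\<close>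

lemma sinh_real_gt_self:
  fixes x :: real
  assumes "0 < x"
  shows "x < sinh x"
proof -
  have "sinh 0 - 0 < sinh x - x"
  proof (rule DERIV_pos_imp_increasing_open[OF assms])
    fix t :: real assume "0 < t" "t < x"
    then show "\<exists>y. ((\<lambda>t. sinh t - t) has_real_derivative y) (at t) \<and> 0 < y"
      using cosh_real_nonneg_less_iff[of 0 t]
      by (auto intro!: derivative_eq_intros exI[of _ "cosh t - 1"])
  qed (intro continuous_intros)
  then show ?thesis by simp
qed

lemma sinh_less_mult_cosh:
  fixes x :: real
  assumes "0 < x"
  shows "sinh x < x * cosh x"
proof -
  have "0 * cosh 0 - sinh 0 < x * cosh x - sinh x"
  proof (rule DERIV_pos_imp_increasing_open[OF assms])
    fix t :: real assume "0 < t" "t < x"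
    then show "\<exists>y. ((\<lambda>t. t * cosh t - sinh t) has_real_derivative y) (at t) \<and> 0 < y"
      by (auto intro!: derivative_eq_intros exI[of _ "t * sinh t"])
  qed (intro continuous_intros)
  then show ?thesis by simp
qed

lemma strict_mono_on_sinh_div_self: "strict_mono_on {0<..} (\<lambda>u::real. sinh u / u)"
proof (rule strict_mono_onI)
  fix u v :: real assume "u \<in> {0<..}" "u < v"
  then show "sinh u / u < sinh v / v"
  proof (intro DERIV_pos_imp_increasing[where f = "\<lambda>u. sinh u / u"])
    fix t assume "u \<le> t" "t \<le> v" "u \<in> {0<..}"
    then have "0 < t" by simp
    then show "\<exists>y. ((\<lambda>u. sinh u / u) has_real_derivative y) (at t) \<and> 0 < y"
      using sinh_less_mult_cosh[of t]
      by (auto intro!: derivative_eq_intros exI[of _ "(t * cosh t - sinh t) / t\<^sup>2"]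
               simp: field_simps power2_eq_square)
  qed simp
qed

lemma strict_mono_on_mult_coth: "strict_mono_on {0<..} (\<lambda>u::real. u * cosh u / sinh u)"
proof (rule strict_mono_onI)
  fix u v :: real assume "u \<in> {0<..}" "u < v"
  then show "u * cosh u / sinh u < v * cosh v / sinh v"
  proof (intro DERIV_pos_imp_increasing[where f = "\<lambda>u. u * cosh u / sinh u"])
    fix t assume "u \<le> t" "t \<le> v" "u \<in> {0<..}"
    then have t: "0 < t" by simp
    have "2 * t < sinh (2 * t)" using t by (intro sinh_real_gt_self) simp
    then have "t < sinh t * cosh t" by (simp add: sinh_double)
    moreover have "cosh t ^ 2 - sinh t ^ 2 = 1" by (rule hyperbolic_pythagoras)
    ultimately show "\<exists>y. ((\<lambda>u. u * cosh u / sinh u) has_real_derivative y) (at t) \<and> 0 < y"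
      using t
      by (auto intro!: derivative_eq_intros exI[of _ "(sinh t * cosh t - t) / (sinh t)\<^sup>2"]
               simp: field_simps power2_eq_square)
  qed simp
qed

lemma tangent_less_of_deriv_strict_mono_on_pos:
  fixes g g' :: "real \<Rightarrow> real"
  assumes deriv: "\<And>s. 0 < s \<Longrightarrow> (g has_real_derivative g' s) (at s)"
    and mono: "strict_mono_on {0<..} g'"
    and "0 < x" "0 < y" "x \<noteq> y"
  shows "(x - y) * g' y < g x - g y"
proof (cases "y < x")
  case True
  then obtain z where z: "y < z" "z < x" "g x - g y = (x - y) * g' z"
    using MVT2[of y x g g'] deriv \<open>0 < y\<close> by force
  have "g' y < g' z" using z \<open>0 < y\<close> by (intro strict_mono_onD[OF mono]) auto
  then show ?thesis using z True by simp
next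
  case False
  then have "x < y" using \<open>x \<noteq> y\<close> by simp
  then obtain z where z: "x < z" "z < y" "g y - g x = (y - x) * g' z"
    using MVT2[of x y g g'] deriv \<open>0 < x\<close> by force
  have "g' z < g' y" using z \<open>0 < x\<close> by (intro strict_mono_onD[OF mono]) auto
  then have "(y - x) * g' z < (y - x) * g' y" using \<open>x < y\<close> by simp
  then show ?thesis using z by (simp add: algebra_simps)
qed

text \<open>Both points are reflected into the positive half-line; when they lie on opposite
  sides of the origin, positivity of the derivative makes up the difference.\<close>

lemma tangent_less_of_even:
  fixes g g' :: "real \<Rightarrow> real"
  assumes deriv: "\<And>s. 0 < s \<Longrightarrow> (g has_real_derivative g' s) (at s)"
    and mono: "strict_mono_on {0<..} g'"
    and pos: "\<And>s. 0 < s \<Longrightarrow> 0 < g' s"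
    and even: "\<And>s. g (- s) = g s" and odd: "\<And>s. g' (- s) = - g' s"
    and "x \<noteq> 0" "y \<noteq> 0" "x \<noteq> y"
  shows "(x - y) * g' y < g x - g y"
proof -
  have tangent: "(u - v) * g' v < g u - g v" if "0 < u" "0 < v" "u \<noteq> v" for u v
    using tangent_less_of_deriv_strict_mono_on_pos[OF deriv mono that] .
  have tangent_le: "(u - v) * g' v \<le> g u - g v" if "0 < u" "0 < v" for u v
    using tangent[OF that] by (cases "u = v") auto
  consider "0 < x" "0 < y" | "x < 0" "y < 0" | "x < 0" "0 < y" | "0 < x" "y < 0"
    using \<open>x \<noteq> 0\<close> \<open>y \<noteq> 0\<close> by linarith
  then show ?thesis
  proof cases
    case 1
    then show ?thesis using tangent \<open>x \<noteq> y\<close> by blast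
  next
    case 2
    then have "(- x - - y) * g' (- y) < g (- x) - g (- y)" using \<open>x \<noteq> y\<close> by (intro tangent) auto
    then show ?thesis by (simp add: even odd algebra_simps)
  next
    case 3
    have "(x - y) * g' y < (- x - y) * g' y" using 3 pos[of y] by simp
    also have "\<dots> \<le> g x - g y" using tangent_le[of "- x" y] 3 by (simp add: even)
    finally show ?thesis .
  next
    case 4
    have "(x - y) * g' y = (y - x) * g' (- y)" by (simp add: odd algebra_simps)
    also have "\<dots> < (x - - y) * g' (- y)" using 4 pos[of "- y"] by (simp add: algebra_simps)
    also have "\<dots> \<le> g x - g y" using tangent_le[of x "- y"] 4 by (simp add: even)
    finally show ?thesis .
  qed
qed

definition ln_sinh_ratio :: "real \<Rightarrow> real \<Rightarrow> real \<Rightarrow> real" where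
  "ln_sinh_ratio \<alpha> \<beta> s = ln (sinh (s * \<alpha>) / sinh (s * \<beta>))"

definition ln_sinh_ratio_deriv :: "real \<Rightarrow> real \<Rightarrow> real \<Rightarrow> real" where
  "ln_sinh_ratio_deriv \<alpha> \<beta> s = \<alpha> * cosh (s * \<alpha>) / sinh (s * \<alpha>) - \<beta> * cosh (s * \<beta>) / sinh (s * \<beta>)"

lemma ln_sinh_ratio_minus [simp]: "ln_sinh_ratio \<alpha> \<beta> (- s) = ln_sinh_ratio \<alpha> \<beta> s"
  by (simp add: ln_sinh_ratio_def)

lemma ln_sinh_ratio_deriv_minus [simp]: "ln_sinh_ratio_deriv \<alpha> \<beta> (- s) = - ln_sinh_ratio_deriv \<alpha> \<beta> s"
  by (simp add: ln_sinh_ratio_deriv_def)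

lemma ln_sinh_ratio_commute: "ln_sinh_ratio \<beta> \<alpha> s = - ln_sinh_ratio \<alpha> \<beta> s"
  unfolding ln_sinh_ratio_def by (metis inverse_divide ln_inverse)

lemma ln_sinh_ratio_deriv_commute: "ln_sinh_ratio_deriv \<beta> \<alpha> s = - ln_sinh_ratio_deriv \<alpha> \<beta> s"
  by (simp add: ln_sinh_ratio_deriv_def)

lemma ln_sinh_ratio_self [simp]: "ln_sinh_ratio \<alpha> \<alpha> s = 0"
  by (simp add: ln_sinh_ratio_def)

lemma ln_sinh_ratio_deriv_self [simp]: "ln_sinh_ratio_deriv \<alpha> \<alpha> s = 0"
  by (simp add: ln_sinh_ratio_deriv_def)

lemma has_real_derivative_ln_sinh_ratio:
  assumes "0 < \<alpha>" "0 < \<beta>" "s \<noteq> 0"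
  shows "(ln_sinh_ratio \<alpha> \<beta> has_real_derivative ln_sinh_ratio_deriv \<alpha> \<beta> s) (at s)"
proof -
  have "0 < sinh (s * \<alpha>) / sinh (s * \<beta>)"
    using assms by (cases "0 < s") (auto simp: zero_less_divide_iff mult_neg_pos)
  moreover have "sinh (s * \<alpha>) \<noteq> 0" "sinh (s * \<beta>) \<noteq> 0" using assms by auto
  ultimately show ?thesis
    unfolding ln_sinh_ratio_def[abs_def] ln_sinh_ratio_deriv_def
    by (auto intro!: derivative_eq_intros simp: field_simps power2_eq_square)
qed

lemma has_real_derivative_ln_sinh_ratio_deriv:
  assumes "s \<noteq> 0" "\<alpha> \<noteq> 0" "\<beta> \<noteq> 0"
  shows "(ln_sinh_ratio_deriv \<alpha> \<beta> has_real_derivative (\<beta> / sinh (s * \<beta>))\<^sup>2 - (\<alpha> / sinh (s * \<alpha>))\<^sup>2) (at s)"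
proof -
  have "sinh (s * \<alpha>) \<noteq> 0" "sinh (s * \<beta>) \<noteq> 0" using assms by auto
  moreover have "cosh u ^ 2 - sinh u ^ 2 = 1" for u :: real by (rule hyperbolic_pythagoras)
  ultimately show ?thesis
    unfolding ln_sinh_ratio_deriv_def[abs_def]
    by (auto intro!: derivative_eq_intros simp: field_simps power2_eq_square)
qed

lemma ln_sinh_ratio_deriv_pos:
  assumes "0 < \<beta>" "\<beta> < \<alpha>" "0 < s"
  shows "0 < ln_sinh_ratio_deriv \<alpha> \<beta> s"
proof -
  have "s * (\<beta> * cosh (s * \<beta>) / sinh (s * \<beta>)) < s * (\<alpha> * cosh (s * \<alpha>) / sinh (s * \<alpha>))"
    using strict_mono_onD[OF strict_mono_on_mult_coth, of "s * \<beta>" "s * \<alpha>"] assms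
    unfolding times_divide_eq_right mult.assoc by simp
  then have "\<beta> * cosh (s * \<beta>) / sinh (s * \<beta>) < \<alpha> * cosh (s * \<alpha>) / sinh (s * \<alpha>)"
    using mult_less_cancel_left_pos[OF \<open>0 < s\<close>] by blast
  then show ?thesis by (simp add: ln_sinh_ratio_deriv_def)
qed

lemma strict_mono_on_ln_sinh_ratio_deriv:
  assumes "0 < \<beta>" "\<beta> < \<alpha>"
  shows "strict_mono_on {0<..} (ln_sinh_ratio_deriv \<alpha> \<beta>)"
proof (rule strict_mono_onI)
  fix s t :: real assume "s \<in> {0<..}" "s < t"
  then show "ln_sinh_ratio_deriv \<alpha> \<beta> s < ln_sinh_ratio_deriv \<alpha> \<beta> t"
  proof (intro DERIV_pos_imp_increasing[where f = "ln_sinh_ratio_deriv \<alpha> \<beta>"])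
    fix u assume "s \<le> u" "u \<le> t" "s \<in> {0<..}"
    then have u: "0 < u" by simp
    have "sinh (u * \<beta>) / (u * \<beta>) < sinh (u * \<alpha>) / (u * \<alpha>)"
      using assms u by (intro strict_mono_onD[OF strict_mono_on_sinh_div_self]) auto
    moreover have "0 < sinh (u * \<beta>) / (u * \<beta>)" using u assms by simp
    ultimately have "inverse (sinh (u * \<alpha>) / (u * \<alpha>)) < inverse (sinh (u * \<beta>) / (u * \<beta>))"
      by (rule less_imp_inverse_less)
    then have "u * (\<alpha> / sinh (u * \<alpha>)) < u * (\<beta> / sinh (u * \<beta>))"
      by (simp add: inverse_divide)
    then have "\<alpha> / sinh (u * \<alpha>) < \<beta> / sinh (u * \<beta>)"
      using mult_less_cancel_left_pos[OF u] by blast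
    moreover have "0 < \<alpha> / sinh (u * \<alpha>)" using u assms by simp
    ultimately have "(\<alpha> / sinh (u * \<alpha>))\<^sup>2 < (\<beta> / sinh (u * \<beta>))\<^sup>2"
      by (intro power_strict_mono) auto
    then show "\<exists>y. (ln_sinh_ratio_deriv \<alpha> \<beta> has_real_derivative y) (at u) \<and> 0 < y"
      using has_real_derivative_ln_sinh_ratio_deriv[of u \<alpha> \<beta>] u assms by auto
  qed simp
qed

lemma ln_sinh_ratio_tangent_less:
  assumes "0 < \<beta>" "\<beta> < \<alpha>" "x \<noteq> 0" "y \<noteq> 0" "x \<noteq> y"
  shows "(x - y) * ln_sinh_ratio_deriv \<alpha> \<beta> y < ln_sinh_ratio \<alpha> \<beta> x - ln_sinh_ratio \<alpha> \<beta> y"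
  using assms
  by (intro tangent_less_of_even has_real_derivative_ln_sinh_ratio
      strict_mono_on_ln_sinh_ratio_deriv ln_sinh_ratio_deriv_pos) auto

lemma ln_sinh_ratio_tangent_greater:
  assumes "0 < \<alpha>" "\<alpha> < \<beta>" "x \<noteq> 0" "y \<noteq> 0" "x \<noteq> y"
  shows "ln_sinh_ratio \<alpha> \<beta> x - ln_sinh_ratio \<alpha> \<beta> y < (x - y) * ln_sinh_ratio_deriv \<alpha> \<beta> y"
  using ln_sinh_ratio_tangent_less[OF assms]
  by (simp add: ln_sinh_ratio_commute[of \<alpha> \<beta>] ln_sinh_ratio_deriv_commute[of \<alpha> \<beta>])

lemma powr_diff_eq_sinh:
  fixes u v s :: real
  assumes "0 < u" "0 < v"
  shows "u powr s - v powr s = 2 * exp (s * ((ln u + ln v) / 2)) * sinh (s * ((ln u - ln v) / 2))"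
proof -
  have "exp (s * ((ln u + ln v) / 2)) * exp (s * ((ln u - ln v) / 2)) = exp (s * ln u)"
    "exp (s * ((ln u + ln v) / 2)) * exp (- (s * ((ln u - ln v) / 2))) = exp (s * ln v)"
    by (simp_all add: exp_add[symmetric] field_simps)
  then show ?thesis
    using assms by (simp add: powr_def sinh_field_def algebra_simps)
qed

lemma powr_diff_divide_pos:
  fixes u v s :: real
  assumes "0 < v" "v < u" "s \<noteq> 0"
  shows "0 < (u powr s - v powr s) / (s * (u - v))"
proof (cases "0 < s")
  case True
  then show ?thesis using assms powr_less_mono2[of s v u] by simp
next
  case False
  then have "s < 0" using assms by simp
  then show ?thesis
    using assms powr_less_mono2_neg[of s v u] by (simp add: zero_less_divide_iff mult_neg_pos)
qed

lemma plog_mean_powr: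
  assumes "0 < v" "v < u" "p \<noteq> 0" "p \<noteq> -1"
  shows "plog_mean p u v powr p = (u powr (p + 1) - v powr (p + 1)) / ((p + 1) * (u - v))"
  using assms powr_diff_divide_pos[of v u "p + 1"]
  by (simp add: plog_mean_def powr_powr abs_of_pos flip: abs_divide)

lemma plog_mean_ratio_powr:
  assumes "0 < b" "b < a" "0 < d" "d < c" "p \<noteq> 0" "p \<noteq> -1"
  shows "(plog_mean p a b / plog_mean p c d) powr p =
    (c - d) / (a - b) * exp ((p + 1) * ((ln a + ln b) / 2 - (ln c + ln d) / 2)
      + ln_sinh_ratio ((ln a - ln b) / 2) ((ln c - ln d) / 2) (p + 1))"
proof -
  define s where "s = p + 1"
  define \<alpha> \<beta> where "\<alpha> = (ln a - ln b) / 2" and "\<beta> = (ln c - ln d) / 2"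
  have "s \<noteq> 0" using assms by (simp add: s_def)
  have "0 < \<alpha>" "0 < \<beta>" using assms by (simp_all add: \<alpha>_def \<beta>_def)
  then have "0 < sinh (s * \<alpha>) / sinh (s * \<beta>)" using \<open>s \<noteq> 0\<close>
    by (cases "0 < s") (auto simp: zero_less_divide_iff mult_neg_pos)
  then have ratio: "sinh (s * \<alpha>) / sinh (s * \<beta>) = exp (ln_sinh_ratio \<alpha> \<beta> s)"
    by (simp add: ln_sinh_ratio_def)
  have "(plog_mean p a b / plog_mean p c d) powr p
      = ((a powr s - b powr s) / (s * (a - b))) / ((c powr s - d powr s) / (s * (c - d)))"
    using assms by (simp add: powr_divide plog_mean_powr s_def)
  also have "\<dots> = (c - d) / (a - b) * (exp (s * ((ln a + ln b) / 2)) / exp (s * ((ln c + ln d) / 2)))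
      * (sinh (s * \<alpha>) / sinh (s * \<beta>))"
    using assms \<open>s \<noteq> 0\<close> \<open>0 < \<beta>\<close>
    by (simp add: powr_diff_eq_sinh \<alpha>_def \<beta>_def field_simps)
  also have "\<dots> = (c - d) / (a - b) * exp (s * ((ln a + ln b) / 2 - (ln c + ln d) / 2) + ln_sinh_ratio \<alpha> \<beta> s)"
    unfolding ratio by (simp add: exp_add exp_diff right_diff_distrib)
  finally show ?thesis by (simp add: s_def \<alpha>_def \<beta>_def)
qed

lemma identric_eq_exp:
  assumes "0 < u" "0 < v" "u \<noteq> v"
  shows "identric u v = exp ((u * ln u - v * ln v) / (u - v) - 1)"
  using assms by (simp add: identric_def powr_def exp_diff[symmetric] exp_minus field_simps)

lemma identric_powr:
  assumes "0 < v" "v < u" "s \<noteq> 0"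
  shows "identric (u powr s) (v powr s) =
    exp (s * ((ln u + ln v) / 2 + (ln u - ln v) / 2 * cosh (s * ((ln u - ln v) / 2)) / sinh (s * ((ln u - ln v) / 2))) - 1)"
proof -
  define m \<alpha> where "m = (ln u + ln v) / 2" and "\<alpha> = (ln u - ln v) / 2"
  define E P N where "E = exp (s * m)" and "P = exp (s * \<alpha>)" and "N = exp (- (s * \<alpha>))"
  have "0 < \<alpha>" using assms by (simp add: \<alpha>_def)
  have U: "u powr s = E * P" and V: "v powr s = E * N"
    using assms by (simp_all add: powr_def E_def P_def N_def exp_add[symmetric] m_def \<alpha>_def field_simps)
  have lnU: "ln (u powr s) = s * (m + \<alpha>)" and lnV: "ln (v powr s) = s * (m - \<alpha>)"
    using assms by (simp_all add: ln_powr m_def \<alpha>_def field_simps)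
  have "P \<noteq> N" using \<open>0 < \<alpha>\<close> assms by (simp add: P_def N_def)
  then have "u powr s \<noteq> v powr s" "P - N \<noteq> 0" using U V by (auto simp: E_def)
  moreover have "0 < E" by (simp add: E_def)
  ultimately have "(u powr s * ln (u powr s) - v powr s * ln (v powr s)) / (u powr s - v powr s)
      = s * (m + \<alpha> * ((P + N) / (P - N)))"
    unfolding lnU lnV unfolding U V by (simp add: field_simps)
  also have "(P + N) / (P - N) = cosh (s * \<alpha>) / sinh (s * \<alpha>)"
    using \<open>P - N \<noteq> 0\<close> by (simp add: P_def N_def cosh_field_def sinh_field_def field_simps)
  finally show ?thesis
    using assms \<open>u powr s \<noteq> v powr s\<close> by (simp add: identric_eq_exp m_def \<alpha>_def)
qed

lemma identric_ratio_powr: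
  assumes "0 < b" "b < a" "0 < d" "d < c" "s \<noteq> 0"
  shows "identric (a powr s) (b powr s) / identric (c powr s) (d powr s) =
    exp (s * ((ln a + ln b) / 2 - (ln c + ln d) / 2
      + ln_sinh_ratio_deriv ((ln a - ln b) / 2) ((ln c - ln d) / 2) s))"
  using assms
  by (simp add: identric_powr ln_sinh_ratio_deriv_def exp_diff[symmetric] algebra_simps)

lemma plog_mean_identric_ratio_powr:
  assumes "0 < b" "b < a" "0 < d" "d < c" "p \<noteq> 0" "p \<noteq> -1" "q \<noteq> 0" "q \<noteq> -1"
  defines "G \<equiv> ln_sinh_ratio ((ln a - ln b) / 2) ((ln c - ln d) / 2)"
    and "G' \<equiv> ln_sinh_ratio_deriv ((ln a - ln b) / 2) ((ln c - ln d) / 2)"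
  shows "(plog_mean q a b / plog_mean q c d) powr q *
      (identric (a powr (q + 1)) (b powr (q + 1)) / identric (c powr (q + 1)) (d powr (q + 1)))
        powr ((p - q) / (q + 1))
    = (plog_mean p a b / plog_mean p c d) powr p *
      exp (- (G (p + 1) - G (q + 1) - (p - q) * G' (q + 1)))"
proof -
  have "q + 1 \<noteq> 0" using assms by simp
  then show ?thesis
    using assms
    by (simp add: plog_mean_ratio_powr identric_ratio_powr exp_powr_real G_def G'_def
        flip: exp_add) (simp add: field_simps)
qed

lemma ln_diff_less_ln_diff_iff:
  fixes a b c d :: real
  assumes "0 < a" "0 < b" "0 < c" "0 < d"
  shows "ln c - ln d < ln a - ln b \<longleftrightarrow> b * c < a * d"
proof -
  have "b * c < a * d \<longleftrightarrow> ln (b * c) < ln (a * d)" using assms by simp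
  then show ?thesis using assms by (simp add: ln_mult algebra_simps)
qed

lemma ln_diff_eq_ln_diff_iff:
  fixes a b c d :: real
  assumes "0 < a" "0 < b" "0 < c" "0 < d"
  shows "ln a - ln b = ln c - ln d \<longleftrightarrow> a * d = b * c"
proof -
  have "a * d = b * c \<longleftrightarrow> ln (a * d) = ln (b * c)" using assms by simp
  then show ?thesis using assms by (simp add: ln_mult algebra_simps)
qed

theorem theorem3p3:
  fixes a b c d p q :: real
  assumes "a > b" "b \<ge> c" "c > d" "d > 0"
    and "p \<noteq> 0" "p \<noteq> -1" "q \<noteq> 0" "q \<noteq> -1"
  shows "(a * d - b * c > 0 \<longrightarrow>
           (plog_mean p a b / plog_mean p c d) powr p \<ge>
           (plog_mean q a b / plog_mean q c d) powr q *
           (identric (a powr (q + 1)) (b powr (q + 1)) / identric (c powr (q + 1)) (d powr (q + 1)))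
             powr ((p - q) / (q + 1)))
       \<and> (a * d - b * c < 0 \<longrightarrow>
           (plog_mean p a b / plog_mean p c d) powr p \<le>
           (plog_mean q a b / plog_mean q c d) powr q *
           (identric (a powr (q + 1)) (b powr (q + 1)) / identric (c powr (q + 1)) (d powr (q + 1)))
             powr ((p - q) / (q + 1)))
       \<and> ((plog_mean p a b / plog_mean p c d) powr p =
           (plog_mean q a b / plog_mean q c d) powr q *
           (identric (a powr (q + 1)) (b powr (q + 1)) / identric (c powr (q + 1)) (d powr (q + 1)))
             powr ((p - q) / (q + 1))
          \<longleftrightarrow> a * d - b * c = 0 \<or> p = q)"
proof -
  \<comment> \<open>The hypothesis \<open>b \<ge> c\<close> serves only to make \<open>b\<close> positive.\<close>
  have pos: "0 < a" "0 < b" "0 < c" "0 < d" using assms by linarith+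
  define \<alpha> \<beta> where "\<alpha> = (ln a - ln b) / 2" and "\<beta> = (ln c - ln d) / 2"
  define gap where "gap = ln_sinh_ratio \<alpha> \<beta> (p + 1) - ln_sinh_ratio \<alpha> \<beta> (q + 1)
    - (p - q) * ln_sinh_ratio_deriv \<alpha> \<beta> (q + 1)"
  have "0 < \<alpha>" "0 < \<beta>" "p + 1 \<noteq> 0" "q + 1 \<noteq> 0" using assms pos by (simp_all add: \<alpha>_def \<beta>_def)
  have factor: "(plog_mean q a b / plog_mean q c d) powr q *
      (identric (a powr (q + 1)) (b powr (q + 1)) / identric (c powr (q + 1)) (d powr (q + 1)))
        powr ((p - q) / (q + 1))
    = (plog_mean p a b / plog_mean p c d) powr p * exp (- gap)" (is "?R = ?L * _")
    using plog_mean_identric_ratio_powr[OF pos(2) \<open>b < a\<close> pos(4) \<open>d < c\<close> assms(5-8)]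
    by (simp only: gap_def \<alpha>_def \<beta>_def)
  have "0 < ?L" using assms pos by (simp add: plog_mean_ratio_powr)
  then have compare: "?R \<le> ?L \<longleftrightarrow> 0 \<le> gap" "?L \<le> ?R \<longleftrightarrow> gap \<le> 0" "?L = ?R \<longleftrightarrow> gap = 0"
    unfolding factor by (simp_all add: mult_le_cancel_left1 mult_le_cancel_left2)
  have "0 < a * d - b * c \<longleftrightarrow> \<beta> < \<alpha>" "a * d - b * c = 0 \<longleftrightarrow> \<alpha> = \<beta>"
    using ln_diff_less_ln_diff_iff[OF pos] ln_diff_eq_ln_diff_iff[OF pos]
    unfolding \<alpha>_def \<beta>_def by auto
  moreover have "0 < gap" if "\<beta> < \<alpha>" "p \<noteq> q"
    using ln_sinh_ratio_tangent_less[OF \<open>0 < \<beta>\<close> that(1) \<open>p + 1 \<noteq> 0\<close> \<open>q + 1 \<noteq> 0\<close>] that(2)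
    unfolding gap_def by simp
  moreover have "gap < 0" if "\<alpha> < \<beta>" "p \<noteq> q"
    using ln_sinh_ratio_tangent_greater[OF \<open>0 < \<alpha>\<close> that(1) \<open>p + 1 \<noteq> 0\<close> \<open>q + 1 \<noteq> 0\<close>] that(2)
    unfolding gap_def by simp
  moreover have "gap = 0" if "\<alpha> = \<beta> \<or> p = q"
    using that unfolding gap_def by auto
  ultimately have "(0 < a * d - b * c \<longrightarrow> 0 \<le> gap) \<and> (a * d - b * c < 0 \<longrightarrow> gap \<le> 0)
      \<and> (gap = 0 \<longleftrightarrow> a * d - b * c = 0 \<or> p = q)"
    by (smt (verit))
  then show ?thesis unfolding compare .
qed

end
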